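(* Let $D\subseteq\Phi^+$ be a rook placement. Then the subspace $\mathfrak{p}\subseteq\mathfrak{n}$ spanned by the $e_{j,i}$, $(i,j)\in\Phi^+\setminus\mathcal{M}$, is a Lie subalgebra of $\mathfrak{n}$.
   Context: Let $n\ge1$ and let $\mathfrak{n}$ be the Lie algebra of strictly upper-triangular complex $n\times n$ matrices; $e_{i,j}$ denotes the elementary matrix with $1$ at position $(i,j)$. Let $\Phi^+=\{(i,j)\in\mathbb{Z}^2:1\le j<i\le n\}$, with rows $\mathcal{R}_k=\{(k,s)\in\Phi^+\}$ and columns $\mathcal{C}_k=\{(r,k)\in\Phi^+\}$. A rook placement is a subset $D\subseteq\Phi^+$ with $|D\cap\mathcal{R}_k|\le 1$ and $|D\cap\mathcal{C}_k|\le1$ for all $k$. Write $D=\{(i_1,j_1),\dots,(i_s,j_s)\}$ with $j_1<\dots<j_s$. Set $\mathcal{M}_{j_0}=\emptyset$ and, recursively for $r=1,\dots,s$, $\mathcal{M}_{j_r}=\{(i_r,q)\in\Phi^+:\ j_r<q<i_r,\ (q,j_r)\notin\bigcup_{l=0}^{r-1}\mathcal{M}_{j_l}\}$, and $\mathcal{M}=\bigcup_{r=1}^s\mathcal{M}_{j_r}$. *)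

theory Defs
  imports Complex_Main "HOL-Library.Function_Algebras"
begin

text \<open>n x n complex matrices are represented as functions nat => nat => complex,
  with rows and columns indexed by 1..n (entries outside are irrelevant / zero).\<close>

type_synonym cmat = "nat \<Rightarrow> nat \<Rightarrow> complex"

definition Phi_pos :: "nat \<Rightarrow> (nat \<times> nat) set" where
  "Phi_pos n = {(i, j). 1 \<le> j \<and> j < i \<and> i \<le> n}"

definition row_set :: "nat \<Rightarrow> nat \<Rightarrow> (nat \<times> nat) set" where
  "row_set n k = {p \<in> Phi_pos n. fst p = k}"

definition col_set :: "nat \<Rightarrow> nat \<Rightarrow> (nat \<times> nat) set" where
  "col_set n k = {p \<in> Phi_pos n. snd p = k}"

definition rook_placement :: "nat \<Rightarrow> (nat \<times> nat) set \<Rightarrow> bool" where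
  "rook_placement n D \<longleftrightarrow> D \<subseteq> Phi_pos n \<and>
     (\<forall>k. card (D \<inter> row_set n k) \<le> 1) \<and> (\<forall>k. card (D \<inter> col_set n k) \<le> 1)"

text \<open>The set M_j for column j, given the union U of all previous M_{j_l} (j_l < j).\<close>
definition M_step :: "nat \<Rightarrow> (nat \<times> nat) set \<Rightarrow> nat \<Rightarrow> (nat \<times> nat) set \<Rightarrow> (nat \<times> nat) set" where
  "M_step n D j U = {(i, q) \<in> Phi_pos n. (i, j) \<in> D \<and> j < q \<and> q < i \<and> (q, j) \<notin> U}"

primrec M_upto :: "nat \<Rightarrow> (nat \<times> nat) set \<Rightarrow> nat \<Rightarrow> (nat \<times> nat) set" where
  "M_upto n D 0 = {}"
| "M_upto n D (Suc j) = M_upto n D j \<union> M_step n D j (M_upto n D j)"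

definition M_set :: "nat \<Rightarrow> (nat \<times> nat) set \<Rightarrow> (nat \<times> nat) set" where
  "M_set n D = M_upto n D (Suc n)"

definition elem :: "nat \<Rightarrow> nat \<Rightarrow> cmat" where
  "elem i j = (\<lambda>a b. if a = i \<and> b = j then 1 else 0)"

definition msmult :: "complex \<Rightarrow> cmat \<Rightarrow> cmat" where
  "msmult c A = (\<lambda>a b. c * A a b)"

definition mmult :: "nat \<Rightarrow> cmat \<Rightarrow> cmat \<Rightarrow> cmat" where
  "mmult n A B = (\<lambda>a b. \<Sum>k = 1..n. A a k * B k b)"

definition lie_bracket :: "nat \<Rightarrow> cmat \<Rightarrow> cmat \<Rightarrow> cmat" where
  "lie_bracket n A B = mmult n A B - mmult n B A"

definition nilp_alg :: "nat \<Rightarrow> cmat set" where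
  "nilp_alg n = {A. \<forall>a b. A a b \<noteq> 0 \<longrightarrow> 1 \<le> a \<and> a < b \<and> b \<le> n}"

definition mspan :: "'i set \<Rightarrow> ('i \<Rightarrow> cmat) \<Rightarrow> cmat set" where
  "mspan S f = {A. \<exists>c. A = (\<Sum>s\<in>S. msmult (c s) (f s))}"

definition lie_subalgebra :: "nat \<Rightarrow> cmat set \<Rightarrow> bool" where
  "lie_subalgebra n P \<longleftrightarrow> P \<subseteq> nilp_alg n \<and> 0 \<in> P \<and>
     (\<forall>A\<in>P. \<forall>B\<in>P. A + B \<in> P) \<and> (\<forall>c. \<forall>A\<in>P. msmult c A \<in> P) \<and>
     (\<forall>A\<in>P. \<forall>B\<in>P. lie_bracket n A B \<in> P)"

end

theory Submission
  imports Defs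
begin

text \<open>The span of the \<open>e\<^sub>j\<^sub>,\<^sub>i\<close>, \<open>(i, j) \<in> S\<close>, is the space of matrices supported on the
  transposed pattern of \<open>S\<close>. A matrix product can only be nonzero at \<open>(a, b)\<close> through some
  \<open>(a, k)\<close> and \<open>(k, b)\<close>, so this space is closed under products, and hence is a Lie subalgebra,
  as soon as \<open>S \<subseteq> \<Phi>\<^sup>+\<close> is transitive as a relation. It remains to show that \<open>\<Phi>\<^sup>+ - \<M>\<close> is
  transitive, i.e. that \<open>(b, a) \<in> \<M>\<close> and \<open>a < k < b\<close> force \<open>(k, a) \<in> \<M>\<close> or \<open>(b, k) \<in> \<M>\<close>.
  This follows by induction on the row \<open>b\<close>: let \<open>(b, c) \<in> D\<close> be the rook responsible for
  \<open>(b, a) \<in> \<M>\<close>, so \<open>(a, c) \<notin> \<M>\<close>. If \<open>(k, c) \<notin> \<M>\<close> then \<open>(b, k) \<in> \<M>\<close> by the same rook;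
  otherwise a rook \<open>(k, c')\<close> puts \<open>(k, c) \<in> \<M>\<close>, and the induction hypothesis at row \<open>a\<close>
  (with \<open>c' < c < a\<close>) shows \<open>(a, c') \<notin> \<M>\<close>, so this rook puts \<open>(k, a) \<in> \<M>\<close>.

  The argument never uses that \<open>D\<close> has at most one rook per row and column.\<close>

definition pattern_space :: "(nat \<times> nat) set \<Rightarrow> cmat set" where
  "pattern_space S = {A. \<forall>a b. A a b \<noteq> 0 \<longrightarrow> (b, a) \<in> S}"

lemma sum_cmat_apply: "(\<Sum>s\<in>S. f s :: cmat) a b = (\<Sum>s\<in>S. f s a b)"
  by (induction S rule: infinite_finite_induct) auto

lemma sum_msmult_transposed_elem_apply:
  assumes "finite S"
  shows "(\<Sum>s\<in>S. msmult (c s) ((\<lambda>(i, j). elem j i) s)) a b = (if (b, a) \<in> S then c (b, a) else 0)"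
proof -
  have "(\<Sum>s\<in>S. msmult (c s) ((\<lambda>(i, j). elem j i) s)) a b = (\<Sum>s\<in>S. if s = (b, a) then c s else 0)"
    unfolding sum_cmat_apply
    by (rule sum.cong) (auto simp: msmult_def elem_def split: prod.splits)
  then show ?thesis
    using assms by (simp add: sum.delta')
qed

lemma mspan_transposed_elem_eq_pattern_space:
  assumes "finite S"
  shows "mspan S (\<lambda>(i, j). elem j i) = pattern_space S"
proof
  show "mspan S (\<lambda>(i, j). elem j i) \<subseteq> pattern_space S"
    by (auto simp: mspan_def pattern_space_def sum_msmult_transposed_elem_apply[OF assms]
        split: if_splits)
next
  show "pattern_space S \<subseteq> mspan S (\<lambda>(i, j). elem j i)"
  proof
    fix A assume "A \<in> pattern_space S"
    then have "A = (\<Sum>s\<in>S. msmult ((\<lambda>(i, j). A j i) s) ((\<lambda>(i, j). elem j i) s))"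
      by (auto simp: fun_eq_iff pattern_space_def sum_msmult_transposed_elem_apply[OF assms])
    then show "A \<in> mspan S (\<lambda>(i, j). elem j i)"
      unfolding mspan_def by blast
  qed
qed

lemma mmult_pattern_space:
  assumes "trans S" and A: "A \<in> pattern_space S" and B: "B \<in> pattern_space S"
  shows "mmult n A B \<in> pattern_space S"
proof -
  have "A a k * B k b = 0" if "(b, a) \<notin> S" for a b k
  proof (cases "A a k = 0")
    case False
    with A have "(k, a) \<in> S"
      by (simp add: pattern_space_def)
    with \<open>trans S\<close> that have "(b, k) \<notin> S"
      by (blast dest: transD)
    with B show ?thesis
      by (auto simp: pattern_space_def)
  qed simp
  then have "mmult n A B a b = 0" if "(b, a) \<notin> S" for a b
    using that by (simp add: mmult_def del: mult_eq_0_iff)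
  then show ?thesis
    by (auto simp: pattern_space_def)
qed

lemma add_pattern_space:
  "A \<in> pattern_space S \<Longrightarrow> B \<in> pattern_space S \<Longrightarrow> A + B \<in> pattern_space S"
  by (simp add: pattern_space_def) (metis add.right_neutral)

lemma diff_pattern_space:
  "A \<in> pattern_space S \<Longrightarrow> B \<in> pattern_space S \<Longrightarrow> A - B \<in> pattern_space S"
  by (simp add: pattern_space_def) metis

lemma lie_subalgebra_pattern_space:
  assumes "S \<subseteq> Phi_pos n" and "trans S"
  shows "lie_subalgebra n (pattern_space S)"
  unfolding lie_subalgebra_def
proof (intro conjI ballI allI)
  show "pattern_space S \<subseteq> nilp_alg n"
    using assms(1) by (auto simp: pattern_space_def nilp_alg_def Phi_pos_def)
next
  fix A B assume "A \<in> pattern_space S" "B \<in> pattern_space S"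
  then show "lie_bracket n A B \<in> pattern_space S"
    unfolding lie_bracket_def by (intro diff_pattern_space mmult_pattern_space assms(2))
qed (simp_all add: add_pattern_space, auto simp: pattern_space_def msmult_def)

lemma finite_Phi_pos: "finite (Phi_pos n)"
  by (rule finite_subset[of _ "{0..n} \<times> {0..n}"]) (auto simp: Phi_pos_def)

lemma M_upto_iff: "x \<in> M_upto n D m \<longleftrightarrow> (\<exists>c<m. x \<in> M_step n D c (M_upto n D c))"
  by (induction m) (auto simp: less_Suc_eq)

lemma M_upto_mono: "a \<le> b \<Longrightarrow> M_upto n D a \<subseteq> M_upto n D b"
  by (induction b) (auto simp: le_Suc_eq)

text \<open>Membership of \<open>(q, c)\<close> is decided while processing columns \<open>< c\<close>, so the union of the
  earlier \<open>\<M>\<^sub>j\<^sub>l\<close> seen when processing column \<open>c\<close> may be replaced by all of \<open>\<M>\<close>.\<close>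

lemma M_set_column_iff: "(q, c) \<in> M_set n D \<longleftrightarrow> (q, c) \<in> M_upto n D c"
proof
  assume "(q, c) \<in> M_set n D"
  then obtain c' where "c' < Suc n" and c': "(q, c) \<in> M_step n D c' (M_upto n D c')"
    unfolding M_set_def M_upto_iff by blast
  then have "c' < c"
    by (auto simp: M_step_def)
  with c' show "(q, c) \<in> M_upto n D c"
    using M_upto_mono[of "Suc c'" c n D] by auto
next
  assume "(q, c) \<in> M_upto n D c"
  then obtain c' where "c' < c" and c': "(q, c) \<in> M_step n D c' (M_upto n D c')"
    unfolding M_upto_iff by blast
  then have "c < n"
    by (auto simp: M_step_def Phi_pos_def)
  with \<open>c' < c\<close> c' show "(q, c) \<in> M_set n D"
    unfolding M_set_def M_upto_iff by (intro exI[of _ c']) auto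
qed

lemma M_set_iff:
  "(k, q) \<in> M_set n D \<longleftrightarrow>
     (k, q) \<in> Phi_pos n \<and> (\<exists>c. (k, c) \<in> D \<and> c < q \<and> q < k \<and> (q, c) \<notin> M_set n D)"
proof -
  have "(k, q) \<in> M_step n D c (M_upto n D c) \<longleftrightarrow>
      (k, q) \<in> Phi_pos n \<and> (k, c) \<in> D \<and> c < q \<and> q < k \<and> (q, c) \<notin> M_set n D" for c
    using M_set_column_iff[of q c n D] by (auto simp: M_step_def)
  moreover have "(k, q) \<in> Phi_pos n \<Longrightarrow> c < q \<Longrightarrow> c < Suc n" for c
    by (auto simp: Phi_pos_def)
  moreover have "(k, q) \<in> M_set n D \<longleftrightarrow> (\<exists>c<Suc n. (k, q) \<in> M_step n D c (M_upto n D c))"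
    unfolding M_set_def by (rule M_upto_iff)
  ultimately show ?thesis
    by blast
qed

lemma M_set_split:
  assumes "(b, a) \<in> M_set n D" and "a < k" and "k < b"
  shows "(k, a) \<in> M_set n D \<or> (b, k) \<in> M_set n D"
  using assms
proof (induction b arbitrary: a k rule: less_induct)
  case (less b)
  from less.prems(1) obtain c where
    c: "(b, a) \<in> Phi_pos n" "(b, c) \<in> D" "c < a" "(a, c) \<notin> M_set n D"
    using M_set_iff by blast
  show ?case
  proof (cases "(k, c) \<in> M_set n D")
    case False
    with c less.prems have "(b, k) \<in> M_set n D"
      by (subst M_set_iff) (auto simp: Phi_pos_def)
    then show ?thesis ..
  next
    case True
    then obtain c' where c': "(k, c') \<in> D" "c' < c" "(c, c') \<notin> M_set n D"
      using M_set_iff by blast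
    have "(a, c') \<notin> M_set n D"
    proof
      assume "(a, c') \<in> M_set n D"
      from less.IH[OF _ this, of c] less.prems c c' show False
        by auto
    qed
    with c c' less.prems have "(k, a) \<in> M_set n D"
      by (subst M_set_iff) (auto simp: Phi_pos_def)
    then show ?thesis ..
  qed
qed

lemma trans_Phi_pos_Diff_M_set: "trans (Phi_pos n - M_set n D)"
proof (rule transI)
  fix b k a
  assume bk: "(b, k) \<in> Phi_pos n - M_set n D" and ka: "(k, a) \<in> Phi_pos n - M_set n D"
  then have "(b, a) \<in> Phi_pos n" and "a < k" "k < b"
    by (auto simp: Phi_pos_def)
  moreover have "(b, a) \<notin> M_set n D"
    using M_set_split[of b a n D k] bk ka \<open>a < k\<close> \<open>k < b\<close> by blast
  ultimately show "(b, a) \<in> Phi_pos n - M_set n D"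
    by blast
qed

theorem proposition2p6:
  fixes n :: nat and D :: "(nat \<times> nat) set"
  assumes "n \<ge> 1" and "rook_placement n D"
  shows "lie_subalgebra n (mspan (Phi_pos n - M_set n D) (\<lambda>(i, j). elem j i))"
proof -
  have "finite (Phi_pos n - M_set n D)"
    using finite_Phi_pos by blast
  then show ?thesis
    by (simp add: mspan_transposed_elem_eq_pattern_space lie_subalgebra_pattern_space
        trans_Phi_pos_Diff_M_set)
qed

end
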